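(* Let $d=s_c+s_e+s_3$ and $$A=\begin{bmatrix}A_1&A_{12}&0\\0&A_2&0\\0&A_{32}&A_3\end{bmatrix},\quad B=\begin{bmatrix}B_1\\0\\0\end{bmatrix},\quad I_1=\begin{bmatrix}I_{s_c}&0&0\\0&0&0\\0&0&0\end{bmatrix},$$ with $A_1\in\mathbb{R}^{s_c\times s_c}$, $A_2\in\mathbb{R}^{s_e\times s_e}$, $A_3\in\mathbb{R}^{s_3\times s_3}$, $B_1\in\mathbb{R}^{s_c\times d_u}$. Let $K=[K_1\ K_2\ 0]\in\mathbb{R}^{d_u\times d}$ (zero on the third block) with $\rho(A+BK)<1$, and let $P_K=\sum_{t\ge0}\big((A+BK)^t\big)^\top(I_1+K^\top K)(A+BK)^t$. Then $$P_K=\begin{bmatrix}P_1&P_{12}&0\\P_{12}^\top&P_2&0\\0&0&0\end{bmatrix}$$ for some matrices $P_1,P_{12},P_2$, i.e. the third block row and column of $P_K$ vanish.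
   Context: $\rho$ denotes the spectral radius. *)

theory Defs
  imports Jordan_Normal_Form.Spectral_Radius
begin

definition block3 ::
  "'a::zero mat \<Rightarrow> 'a mat \<Rightarrow> 'a mat \<Rightarrow> 'a mat \<Rightarrow> 'a mat \<Rightarrow> 'a mat \<Rightarrow> 'a mat \<Rightarrow> 'a mat \<Rightarrow> 'a mat \<Rightarrow> 'a mat"
  where
  "block3 M11 M12 M13 M21 M22 M23 M31 M32 M33 =
     (let r1 = dim_row M11; r2 = dim_row M22; r3 = dim_row M33;
          c1 = dim_col M11; c2 = dim_col M22; c3 = dim_col M33
      in mat (r1 + r2 + r3) (c1 + c2 + c3)
        (\<lambda>(i, j).
           if i < r1 then
             (if j < c1 then M11 $$ (i, j) else if j < c1 + c2 then M12 $$ (i, j - c1)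
              else M13 $$ (i, j - c1 - c2))
           else if i < r1 + r2 then
             (if j < c1 then M21 $$ (i - r1, j) else if j < c1 + c2 then M22 $$ (i - r1, j - c1)
              else M23 $$ (i - r1, j - c1 - c2))
           else
             (if j < c1 then M31 $$ (i - r1 - r2, j) else if j < c1 + c2 then M32 $$ (i - r1 - r2, j - c1)
              else M33 $$ (i - r1 - r2, j - c1 - c2))))"

definition PK :: "real mat \<Rightarrow> real mat \<Rightarrow> real mat" where
  "PK M Q = mat (dim_row M) (dim_col M)
     (\<lambda>(i, j). (\<Sum>t. ((transpose_mat (M ^\<^sub>m t) * Q * (M ^\<^sub>m t)) $$ (i, j))))"

end

theory Submission
  imports Defs
begin

text \<open>Split the coordinates at k = s_c + s_e. The closed loop matrix A + BK is block lower
  triangular for this split, hence so are its powers, and the weight I_1 + K^T K vanishes outside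
  the leading k \<times> k block. Congruence X^T Q X by a block lower triangular X preserves this
  vanishing, so every term of the series defining P_K vanishes outside the leading block, and every
  term is symmetric.\<close>

definition lower_block_triangular :: "nat \<Rightarrow> 'a::zero mat \<Rightarrow> bool" where
  "lower_block_triangular k M \<longleftrightarrow>
     (\<forall>i<dim_row M. \<forall>j<dim_col M. i < k \<longrightarrow> k \<le> j \<longrightarrow> M $$ (i, j) = 0)"

definition trailing_cols_zero :: "nat \<Rightarrow> 'a::zero mat \<Rightarrow> bool" where
  "trailing_cols_zero k M \<longleftrightarrow> (\<forall>i<dim_row M. \<forall>j<dim_col M. k \<le> j \<longrightarrow> M $$ (i, j) = 0)"

definition supported_in_leading_block :: "nat \<Rightarrow> 'a::zero mat \<Rightarrow> bool" where
  "supported_in_leading_block k M \<longleftrightarrow>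
     (\<forall>i<dim_row M. \<forall>j<dim_col M. k \<le> i \<or> k \<le> j \<longrightarrow> M $$ (i, j) = 0)"

lemma index_mult_mat_sum:
  assumes "i < dim_row A" "j < dim_col B" "dim_col A = dim_row B"
  shows "(A * B) $$ (i, j) = (\<Sum>l<dim_row B. A $$ (i, l) * B $$ (l, j))"
  using assms by (auto simp: scalar_prod_def lessThan_atLeast0 intro: sum.cong)

lemma trailing_cols_zero_mult:
  fixes A B :: "'a::semiring_0 mat"
  assumes "trailing_cols_zero k B" "dim_col A = dim_row B"
  shows "trailing_cols_zero k (A * B)"
  using assms unfolding trailing_cols_zero_def
  by (auto simp: index_mult_mat_sum simp del: index_mult_mat(1))

lemma trailing_cols_zero_imp_lower_block_triangular:
  "trailing_cols_zero k M \<Longrightarrow> lower_block_triangular k M"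
  unfolding trailing_cols_zero_def lower_block_triangular_def by blast

lemma lower_block_triangular_add:
  fixes A B :: "'a::monoid_add mat"
  assumes "lower_block_triangular k A" "lower_block_triangular k B"
    "B \<in> carrier_mat (dim_row A) (dim_col A)"
  shows "lower_block_triangular k (A + B)"
  using assms unfolding lower_block_triangular_def by auto

lemma lower_block_triangular_mult:
  fixes A B :: "'a::semiring_0 mat"
  assumes A: "lower_block_triangular k A" and B: "lower_block_triangular k B"
    and dim: "dim_col A = dim_row B"
  shows "lower_block_triangular k (A * B)"
  unfolding lower_block_triangular_def
proof (intro allI impI)
  fix i j assume ij: "i < dim_row (A * B)" "j < dim_col (A * B)" "i < k" "k \<le> j"
  have "A $$ (i, l) * B $$ (l, j) = 0" if "l < dim_row B" for l
    using A B dim ij that unfolding lower_block_triangular_def by (cases "l < k") auto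
  then show "(A * B) $$ (i, j) = 0"
    using ij dim by (simp add: index_mult_mat_sum del: index_mult_mat(1))
qed

lemma lower_block_triangular_pow:
  fixes M :: "'a::semiring_1 mat"
  assumes M: "M \<in> carrier_mat n n" and "lower_block_triangular k M"
  shows "lower_block_triangular k (M ^\<^sub>m t)"
proof (induction t)
  case 0
  then show ?case by (simp add: lower_block_triangular_def)
next
  case (Suc t)
  then show ?case using assms by (auto intro: lower_block_triangular_mult)
qed

lemma supported_in_leading_block_iff:
  "supported_in_leading_block k M \<longleftrightarrow>
     trailing_cols_zero k M \<and> trailing_cols_zero k (transpose_mat M)"
  unfolding supported_in_leading_block_def trailing_cols_zero_def by auto

lemma supported_in_leading_block_transpose:
  "supported_in_leading_block k M \<Longrightarrow> supported_in_leading_block k (transpose_mat M)"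
  by (simp add: supported_in_leading_block_iff)

lemma supported_in_leading_block_add:
  fixes A B :: "'a::monoid_add mat"
  assumes "supported_in_leading_block k A" "supported_in_leading_block k B"
    "B \<in> carrier_mat (dim_row A) (dim_col A)"
  shows "supported_in_leading_block k (A + B)"
  using assms unfolding supported_in_leading_block_def by auto

lemma supported_in_leading_block_mult_right:
  fixes Q X :: "'a::semiring_0 mat"
  assumes Q: "supported_in_leading_block k Q" and X: "lower_block_triangular k X"
    and dim: "dim_col Q = dim_row X"
  shows "supported_in_leading_block k (Q * X)"
  unfolding supported_in_leading_block_def
proof (intro allI impI)
  fix i j assume ij: "i < dim_row (Q * X)" "j < dim_col (Q * X)" "k \<le> i \<or> k \<le> j"
  have "Q $$ (i, l) * X $$ (l, j) = 0" if "l < dim_row X" for l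
    using Q X dim ij that
    unfolding supported_in_leading_block_def lower_block_triangular_def by (cases "l < k") auto
  then show "(Q * X) $$ (i, j) = 0"
    using ij dim by (simp add: index_mult_mat_sum del: index_mult_mat(1))
qed

lemma transpose_congruence:
  fixes Q X :: "'a::comm_semiring_0 mat"
  assumes Q: "Q \<in> carrier_mat n n" and X: "X \<in> carrier_mat n m"
  shows "transpose_mat (transpose_mat X * Q * X) = transpose_mat X * transpose_mat Q * X"
proof -
  have "transpose_mat (transpose_mat X * Q * X) = transpose_mat (transpose_mat X * (Q * X))"
    using Q X by simp
  also have "\<dots> = transpose_mat (Q * X) * X"
    using Q X transpose_mult[of "transpose_mat X" m n "Q * X" m] by simp
  also have "\<dots> = transpose_mat X * transpose_mat Q * X"
    using transpose_mult[OF Q X] by simp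
  finally show ?thesis .
qed

lemma supported_in_leading_block_congruence:
  fixes Q X :: "'a::comm_semiring_0 mat"
  assumes Q: "Q \<in> carrier_mat n n" "supported_in_leading_block k Q"
    and X: "X \<in> carrier_mat n m" "lower_block_triangular k X"
  shows "supported_in_leading_block k (transpose_mat X * Q * X)"
proof -
  have "supported_in_leading_block k (Q * X)"
    using assms by (intro supported_in_leading_block_mult_right) auto
  then have "supported_in_leading_block k (transpose_mat (Q * X) * X)"
    using Q X
    by (intro supported_in_leading_block_mult_right[OF supported_in_leading_block_transpose]) auto
  then have "supported_in_leading_block k (transpose_mat (transpose_mat (Q * X) * X))"
    by (rule supported_in_leading_block_transpose)
  moreover have "transpose_mat (transpose_mat (Q * X) * X) = transpose_mat X * Q * X"
    using Q X transpose_mult[of "transpose_mat (Q * X)" m n X m] by simp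
  ultimately show ?thesis by simp
qed

lemma symmetric_supported_in_leading_blockI:
  "transpose_mat M = M \<Longrightarrow> trailing_cols_zero k M \<Longrightarrow> supported_in_leading_block k M"
  by (simp add: supported_in_leading_block_iff)

lemma transpose_transpose_mult_self:
  fixes K :: "'a::comm_semiring_0 mat"
  shows "transpose_mat (transpose_mat K * K) = transpose_mat K * K"
proof -
  have "transpose_mat K \<in> carrier_mat (dim_col K) (dim_row K)"
    "K \<in> carrier_mat (dim_row K) (dim_col K)"
    by auto
  from transpose_mult[OF this] show ?thesis
    by simp
qed

lemma supported_in_leading_block_transpose_mult_self:
  fixes K :: "'a::comm_semiring_0 mat"
  assumes "trailing_cols_zero k K"
  shows "supported_in_leading_block k (transpose_mat K * K)"
  using assms by (intro symmetric_supported_in_leading_blockI transpose_transpose_mult_self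
      trailing_cols_zero_mult) auto

lemma PK_carrier: "M \<in> carrier_mat n n \<Longrightarrow> PK M Q \<in> carrier_mat n n"
  unfolding PK_def by simp

lemma index_PK:
  "M \<in> carrier_mat n n \<Longrightarrow> i < n \<Longrightarrow> j < n \<Longrightarrow>
     PK M Q $$ (i, j) = (\<Sum>t. (transpose_mat (M ^\<^sub>m t) * Q * M ^\<^sub>m t) $$ (i, j))"
  unfolding PK_def by simp

lemma congruence_pow_carrier:
  "M \<in> carrier_mat n n \<Longrightarrow> Q \<in> carrier_mat n n \<Longrightarrow>
     transpose_mat (M ^\<^sub>m t) * Q * M ^\<^sub>m t \<in> carrier_mat n n"
  by (metis mult_carrier_mat pow_carrier_mat transpose_carrier_mat)

lemma supported_in_leading_block_PK:
  assumes M: "M \<in> carrier_mat n n" "lower_block_triangular k M"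
    and Q: "Q \<in> carrier_mat n n" "supported_in_leading_block k Q"
  shows "supported_in_leading_block k (PK M Q)"
  unfolding supported_in_leading_block_def
proof (intro allI impI)
  fix i j assume ij: "i < dim_row (PK M Q)" "j < dim_col (PK M Q)" "k \<le> i \<or> k \<le> j"
  then have n: "i < n" "j < n"
    using M by (simp_all add: PK_def)
  have "supported_in_leading_block k (transpose_mat (M ^\<^sub>m t) * Q * M ^\<^sub>m t)" for t
    using assms by (intro supported_in_leading_block_congruence lower_block_triangular_pow) auto
  then have "(transpose_mat (M ^\<^sub>m t) * Q * M ^\<^sub>m t) $$ (i, j) = 0" for t
    using congruence_pow_carrier[OF M(1) Q(1), of t] n ij(3)
    unfolding supported_in_leading_block_def by blast
  then show "PK M Q $$ (i, j) = 0"
    using M n by (simp add: index_PK)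
qed

lemma transpose_PK:
  assumes M: "M \<in> carrier_mat n n" and Q: "Q \<in> carrier_mat n n" "transpose_mat Q = Q"
  shows "transpose_mat (PK M Q) = PK M Q"
proof (rule eq_matI)
  fix i j assume "i < dim_row (PK M Q)" "j < dim_col (PK M Q)"
  then have n: "i < n" "j < n"
    using M by (simp_all add: PK_def)
  have sym: "(transpose_mat (M ^\<^sub>m t) * Q * M ^\<^sub>m t) $$ (j, i) =
             (transpose_mat (M ^\<^sub>m t) * Q * M ^\<^sub>m t) $$ (i, j)" for t
    using transpose_congruence[OF Q(1) pow_carrier_mat[OF M, of t]] Q(2)
      congruence_pow_carrier[OF M Q(1), of t] n
    by (metis carrier_matD index_transpose_mat(1))
  have "transpose_mat (PK M Q) $$ (i, j) = PK M Q $$ (j, i)"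
    using M n by (simp add: PK_def)
  also have "\<dots> = PK M Q $$ (i, j)"
    using n by (simp only: index_PK[OF M] sym)
  finally show "transpose_mat (PK M Q) $$ (i, j) = PK M Q $$ (i, j)" .
qed (use M in \<open>simp_all add: PK_def\<close>)

lemma dim_block3[simp]:
  "dim_row (block3 M11 M12 M13 M21 M22 M23 M31 M32 M33) = dim_row M11 + dim_row M22 + dim_row M33"
  "dim_col (block3 M11 M12 M13 M21 M22 M23 M31 M32 M33) = dim_col M11 + dim_col M22 + dim_col M33"
  by (simp_all add: block3_def Let_def)

lemma lower_block_triangular_block3:
  assumes "M11 \<in> carrier_mat n1 n1" "M22 \<in> carrier_mat n2 n2" "M33 \<in> carrier_mat n3 n3"
  shows "lower_block_triangular (n1 + n2)
           (block3 M11 M12 (0\<^sub>m n1 n3) M21 M22 (0\<^sub>m n2 n3) M31 M32 M33)"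
  using assms unfolding lower_block_triangular_def by (auto simp: block3_def Let_def)

lemma trailing_cols_zero_block3:
  assumes "M11 \<in> carrier_mat r1 c1" "M22 \<in> carrier_mat r2 c2"
  shows "trailing_cols_zero (c1 + c2)
           (block3 M11 M12 (0\<^sub>m r1 c3) M21 M22 (0\<^sub>m r2 c3) M31 M32 (0\<^sub>m r3 c3))"
  using assms unfolding trailing_cols_zero_def by (auto simp: block3_def Let_def)

lemma transpose_block3:
  assumes "M11 \<in> carrier_mat n1 n1" "M12 \<in> carrier_mat n1 n2" "M13 \<in> carrier_mat n1 n3"
    "M21 \<in> carrier_mat n2 n1" "M22 \<in> carrier_mat n2 n2" "M23 \<in> carrier_mat n2 n3"
    "M31 \<in> carrier_mat n3 n1" "M32 \<in> carrier_mat n3 n2" "M33 \<in> carrier_mat n3 n3"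
  shows "transpose_mat (block3 M11 M12 M13 M21 M22 M23 M31 M32 M33) =
    block3 (transpose_mat M11) (transpose_mat M21) (transpose_mat M31)
           (transpose_mat M12) (transpose_mat M22) (transpose_mat M32)
           (transpose_mat M13) (transpose_mat M23) (transpose_mat M33)"
  using assms by (intro eq_matI) (auto simp: block3_def Let_def)

lemma symmetric_supported_eq_block3:
  fixes P :: "'a::zero mat"
  assumes P: "P \<in> carrier_mat (a + b + c) (a + b + c)" "transpose_mat P = P"
    and supp: "supported_in_leading_block (a + b) P"
  shows "\<exists>P1 P12 P2. P1 \<in> carrier_mat a a \<and> P12 \<in> carrier_mat a b \<and> P2 \<in> carrier_mat b b \<and>
           P = block3 P1 P12 (0\<^sub>m a c) (transpose_mat P12) P2 (0\<^sub>m b c)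
                      (0\<^sub>m c a) (0\<^sub>m c b) (0\<^sub>m c c)"
proof (intro exI conjI)
  define P1 where "P1 = mat a a (\<lambda>(i, j). P $$ (i, j))"
  define P12 where "P12 = mat a b (\<lambda>(i, j). P $$ (i, j + a))"
  define P2 where "P2 = mat b b (\<lambda>(i, j). P $$ (i + a, j + a))"
  show "P1 \<in> carrier_mat a a" "P12 \<in> carrier_mat a b" "P2 \<in> carrier_mat b b"
    by (simp_all add: P1_def P12_def P2_def)
  show "P = block3 P1 P12 (0\<^sub>m a c) (transpose_mat P12) P2 (0\<^sub>m b c)
                    (0\<^sub>m c a) (0\<^sub>m c b) (0\<^sub>m c c)"
  proof (rule eq_matI)
    fix i j assume "i < dim_row (block3 P1 P12 (0\<^sub>m a c) (transpose_mat P12) P2 (0\<^sub>m b c)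
                                   (0\<^sub>m c a) (0\<^sub>m c b) (0\<^sub>m c c))"
      and "j < dim_col (block3 P1 P12 (0\<^sub>m a c) (transpose_mat P12) P2 (0\<^sub>m b c)
                                   (0\<^sub>m c a) (0\<^sub>m c b) (0\<^sub>m c c))"
    then have ij: "i < a + b + c" "j < a + b + c"
      by (simp_all add: P1_def P2_def)
    show "P $$ (i, j) = block3 P1 P12 (0\<^sub>m a c) (transpose_mat P12) P2 (0\<^sub>m b c)
                              (0\<^sub>m c a) (0\<^sub>m c b) (0\<^sub>m c c) $$ (i, j)"
    proof (cases "a + b \<le> i \<or> a + b \<le> j")
      case True
      then show ?thesis
        using P(1) supp ij unfolding supported_in_leading_block_def
        by (auto simp: block3_def Let_def P1_def P2_def)
    next
      case False
      have "P $$ (j, i) = P $$ (i, j)"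
        using P ij by (metis carrier_matD index_transpose_mat(1))
      with False show ?thesis
        by (auto simp: block3_def Let_def P1_def P12_def P2_def)
    qed
  qed (simp_all add: P(1)[THEN carrier_matD(1)] P(1)[THEN carrier_matD(2)] P1_def P2_def)
qed

theorem lemma3:
  fixes sc se s3 du :: nat
    and A1 A12 A2 A32 A3 B1 K1 K2 :: "real mat"
  assumes "A1 \<in> carrier_mat sc sc" and "A12 \<in> carrier_mat sc se"
    and "A2 \<in> carrier_mat se se" and "A32 \<in> carrier_mat s3 se"
    and "A3 \<in> carrier_mat s3 s3" and "B1 \<in> carrier_mat sc du"
    and "K1 \<in> carrier_mat du sc" and "K2 \<in> carrier_mat du se"
  defines "A \<equiv> block3 A1 A12 (0\<^sub>m sc s3) (0\<^sub>m se sc) A2 (0\<^sub>m se s3) (0\<^sub>m s3 sc) A32 A3"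
    and "B \<equiv> block3 B1 (0\<^sub>m sc 0) (0\<^sub>m sc 0) (0\<^sub>m se du) (0\<^sub>m se 0) (0\<^sub>m se 0)
                    (0\<^sub>m s3 du) (0\<^sub>m s3 0) (0\<^sub>m s3 0)"
    and "I1 \<equiv> block3 (1\<^sub>m sc) (0\<^sub>m sc se) (0\<^sub>m sc s3) (0\<^sub>m se sc) (0\<^sub>m se se) (0\<^sub>m se s3)
                     (0\<^sub>m s3 sc) (0\<^sub>m s3 se) (0\<^sub>m s3 s3)"
    and "K \<equiv> block3 K1 K2 (0\<^sub>m du s3) (0\<^sub>m 0 sc) (0\<^sub>m 0 se) (0\<^sub>m 0 s3)
                    (0\<^sub>m 0 sc) (0\<^sub>m 0 se) (0\<^sub>m 0 s3)"
  assumes "spectral_radius (map_mat complex_of_real (A + B * K)) < 1"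
  shows "\<exists>P1 P12 P2. P1 \<in> carrier_mat sc sc \<and> P12 \<in> carrier_mat sc se \<and> P2 \<in> carrier_mat se se \<and>
           PK (A + B * K) (I1 + transpose_mat K * K) =
             block3 P1 P12 (0\<^sub>m sc s3) (transpose_mat P12) P2 (0\<^sub>m se s3)
                    (0\<^sub>m s3 sc) (0\<^sub>m s3 se) (0\<^sub>m s3 s3)"
proof -
  let ?k = "sc + se" and ?n = "sc + se + s3"
  note dims = assms(1-8)
  have A: "A \<in> carrier_mat ?n ?n" and B: "B \<in> carrier_mat ?n du"
    and K: "K \<in> carrier_mat du ?n" and I1: "I1 \<in> carrier_mat ?n ?n"
    using dims unfolding A_def B_def K_def I1_def carrier_mat_def by simp_all
  have K_cols: "trailing_cols_zero ?k K"
    unfolding K_def using dims by (intro trailing_cols_zero_block3) auto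
  have closed_loop: "lower_block_triangular ?k (A + B * K)"
  proof (rule lower_block_triangular_add)
    show "lower_block_triangular ?k A"
      unfolding A_def using dims by (intro lower_block_triangular_block3)
    show "lower_block_triangular ?k (B * K)"
      using K_cols B K
      by (intro trailing_cols_zero_imp_lower_block_triangular trailing_cols_zero_mult) auto
  qed (use A B K in auto)
  have I1_sym: "transpose_mat I1 = I1"
    unfolding I1_def by (subst transpose_block3) auto
  have weight_sym: "transpose_mat (I1 + transpose_mat K * K) = I1 + transpose_mat K * K"
    using I1 K I1_sym by (simp add: transpose_add[of _ ?n ?n] transpose_transpose_mult_self)
  have weight_supp: "supported_in_leading_block ?k (I1 + transpose_mat K * K)"
  proof (rule supported_in_leading_block_add)
    show "supported_in_leading_block ?k I1"
      using I1_sym unfolding I1_def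
      by (intro symmetric_supported_in_leading_blockI trailing_cols_zero_block3) auto
  qed (use K_cols I1 K in \<open>auto intro: supported_in_leading_block_transpose_mult_self\<close>)
  have M: "A + B * K \<in> carrier_mat ?n ?n" and Q: "I1 + transpose_mat K * K \<in> carrier_mat ?n ?n"
    using A B K I1 by auto
  show ?thesis
    using symmetric_supported_eq_block3[OF PK_carrier[OF M] transpose_PK[OF M Q weight_sym]
        supported_in_leading_block_PK[OF M closed_loop Q weight_supp]] .
qed

end
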